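(* Let $S\subseteq\mathbb N^d$ be a good semigroup, $E\subsetneq S$ a proper good ideal, and $A=S\setminus E=\bigcup_{i=1}^NA_i$ its partition into levels. Suppose that for every $i=1,\dots,N-1$ and every $\boldsymbol\alpha\in A_i$ there exists $\boldsymbol\beta\in A_{i+1}$ with $\boldsymbol\beta\gg\boldsymbol\alpha$. Then $A$ is well-behaved.
   Context: Notation: on $\mathbb{Z}^d$, $\le$ componentwise, $\boldsymbol\alpha\ll\boldsymbol\beta$ (also written $\boldsymbol\beta\gg\boldsymbol\alpha$) means $\alpha_i<\beta_i$ for all $i$, $\boldsymbol\alpha\le\le\boldsymbol\beta$ means $\boldsymbol\alpha=\boldsymbol\beta$ or $\boldsymbol\alpha\ll\boldsymbol\beta$, $\wedge$ componentwise minimum, $I=\{1,\dots,d\}$. For $T\subseteq\mathbb Z^d$: $\Delta^T_F(\boldsymbol\alpha)=\{\boldsymbol\beta\in T:\beta_i=\alpha_i\ (i\in F),\ \beta_j>\alpha_j\ (j\notin F)\}$, $\widetilde\Delta^T_F(\boldsymbol\alpha)=\{\boldsymbol\beta\in T:\beta_i=\alpha_i\ (i\in F),\ \beta_j\ge\alpha_j\ (j\notin F)\}\setminus\{\boldsymbol\alpha\}$. A good semigroup is a submonoid $S$ of $(\mathbb{N}^d,+)$ closed under $\wedge$ (G1), satisfying (G2): if $\boldsymbol\alpha\neq\boldsymbol\beta\in S$ and $\alpha_i=\beta_i$, there is $\boldsymbol\epsilon\in S$ with $\epsilon_i>\alpha_i$, $\epsilon_j\ge\min\{\alpha_j,\beta_j\}$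 for $j\ne i$, with equality if $\alpha_j\ne\beta_j$; and (G3): $\boldsymbol c+\mathbb N^d\subseteq S$ for some $\boldsymbol c$. A good ideal is $E\subseteq S$ with $E+S\subseteq E$ satisfying (G1)–(G3). Complete infimum: $\boldsymbol\alpha\in B\subseteq S$ is a complete infimum of $\boldsymbol\beta^{(1)},\dots,\boldsymbol\beta^{(r)}\in B$ ($r\ge2$) if $\boldsymbol\beta^{(j)}\in\Delta^S_{F_j}(\boldsymbol\alpha)$ with $\emptyset\ne F_j\subsetneq I$, $\boldsymbol\beta^{(j)}\wedge\boldsymbol\beta^{(k)}=\boldsymbol\alpha$ ($j\ne k$), $\bigcap F_j=\emptyset$. Levels: $B^{(1)}$ = maximal elements of $A$ for $\le\le$, $C^{(1)}$ = those that are complete infima of $r$ elements of $B^{(1)}$ ($1<r\le d$), $D^{(1)}=B^{(1)}\setminus C^{(1)}$; inductively for $A\setminus\bigcup_{j<i}D^{(j)}$; $A=\bigsqcup_{i=1}^ND^{(i)}$, $A_i=D^{(N+1-i)}$. Well-behaved: $A$ is well-behaved if whenever $\boldsymbol\alpha\in S$ is a complete infimum (in $S$) of $\boldsymbol\beta^{(1)},\dots,\boldsymbol\beta^{(r)}$ with, for each $j$, $\boldsymbol\beta^{(j)}\in\widetilde\Delta^S_{G_j}(\boldsymbol\alpha)$ and $\widetilde\Delta^S_{G_j}(\boldsymbol\alpha)\subseteq A$, then $\boldsymbol\alpha\in E$. *)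

theory Defs
  imports Main
begin

text \<open>Points of N^d are functions from a finite index type 'i (with CARD('i) = d) to nat.
  The index set I is UNIV.\<close>

definition vle :: "('i \<Rightarrow> nat) \<Rightarrow> ('i \<Rightarrow> nat) \<Rightarrow> bool" where
  "vle a b \<longleftrightarrow> (\<forall>i. a i \<le> b i)"

definition vll :: "('i \<Rightarrow> nat) \<Rightarrow> ('i \<Rightarrow> nat) \<Rightarrow> bool" where
  "vll a b \<longleftrightarrow> (\<forall>i. a i < b i)"

definition vlele :: "('i \<Rightarrow> nat) \<Rightarrow> ('i \<Rightarrow> nat) \<Rightarrow> bool" where
  "vlele a b \<longleftrightarrow> a = b \<or> vll a b"

definition vmeet :: "('i \<Rightarrow> nat) \<Rightarrow> ('i \<Rightarrow> nat) \<Rightarrow> ('i \<Rightarrow> nat)" where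
  "vmeet a b = (\<lambda>i. min (a i) (b i))"

definition vadd :: "('i \<Rightarrow> nat) \<Rightarrow> ('i \<Rightarrow> nat) \<Rightarrow> ('i \<Rightarrow> nat)" where
  "vadd a b = (\<lambda>i. a i + b i)"

definition Delta :: "('i \<Rightarrow> nat) set \<Rightarrow> 'i set \<Rightarrow> ('i \<Rightarrow> nat) \<Rightarrow> ('i \<Rightarrow> nat) set" where
  "Delta T F a = {b \<in> T. (\<forall>i\<in>F. b i = a i) \<and> (\<forall>j. j \<notin> F \<longrightarrow> b j > a j)}"

definition Delta_tilde :: "('i \<Rightarrow> nat) set \<Rightarrow> 'i set \<Rightarrow> ('i \<Rightarrow> nat) \<Rightarrow> ('i \<Rightarrow> nat) set" where
  "Delta_tilde T F a = {b \<in> T. (\<forall>i\<in>F. b i = a i) \<and> (\<forall>j. j \<notin> F \<longrightarrow> b j \<ge> a j)} - {a}"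

definition G1 :: "('i \<Rightarrow> nat) set \<Rightarrow> bool" where
  "G1 T \<longleftrightarrow> (\<forall>a\<in>T. \<forall>b\<in>T. vmeet a b \<in> T)"

definition G2 :: "('i \<Rightarrow> nat) set \<Rightarrow> bool" where
  "G2 T \<longleftrightarrow> (\<forall>a\<in>T. \<forall>b\<in>T. \<forall>i. a \<noteq> b \<and> a i = b i \<longrightarrow>
     (\<exists>e\<in>T. e i > a i \<and>
        (\<forall>j. j \<noteq> i \<longrightarrow> e j \<ge> min (a j) (b j) \<and>
                         (a j \<noteq> b j \<longrightarrow> e j = min (a j) (b j)))))"

definition G3 :: "('i \<Rightarrow> nat) set \<Rightarrow> bool" where
  "G3 T \<longleftrightarrow> (\<exists>c. \<forall>x. vle c x \<longrightarrow> x \<in> T)"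

definition good_semigroup :: "('i \<Rightarrow> nat) set \<Rightarrow> bool" where
  "good_semigroup S \<longleftrightarrow> (\<lambda>_. 0) \<in> S \<and> (\<forall>a\<in>S. \<forall>b\<in>S. vadd a b \<in> S)
     \<and> G1 S \<and> G2 S \<and> G3 S"

definition good_ideal :: "('i \<Rightarrow> nat) set \<Rightarrow> ('i \<Rightarrow> nat) set \<Rightarrow> bool" where
  "good_ideal S E \<longleftrightarrow> E \<subseteq> S \<and> (\<forall>a\<in>E. \<forall>s\<in>S. vadd a s \<in> E)
     \<and> G1 E \<and> G2 E \<and> G3 E"

definition complete_inf ::
  "('i \<Rightarrow> nat) set \<Rightarrow> ('i \<Rightarrow> nat) set \<Rightarrow> ('i \<Rightarrow> nat) \<Rightarrow> nat \<Rightarrow> (nat \<Rightarrow> ('i \<Rightarrow> nat)) \<Rightarrow> bool" where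
  "complete_inf S B a r bs \<longleftrightarrow> a \<in> B \<and> r \<ge> 2 \<and> (\<forall>j<r. bs j \<in> B) \<and>
     (\<exists>F :: nat \<Rightarrow> 'i set.
        (\<forall>j<r. F j \<noteq> {} \<and> F j \<noteq> UNIV \<and> bs j \<in> Delta S (F j) a) \<and>
        (\<forall>j<r. \<forall>k<r. j \<noteq> k \<longrightarrow> vmeet (bs j) (bs k) = a) \<and>
        (\<Inter>j\<in>{..<r}. F j) = {})"

definition maxel :: "('i \<Rightarrow> nat) set \<Rightarrow> ('i \<Rightarrow> nat) set" where
  "maxel T = {a \<in> T. \<forall>b\<in>T. vlele a b \<longrightarrow> b = a}"

definition Cset :: "('i::finite \<Rightarrow> nat) set \<Rightarrow> ('i \<Rightarrow> nat) set \<Rightarrow> ('i \<Rightarrow> nat) set" where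
  "Cset S T = {a \<in> maxel T. \<exists>r bs. 1 < r \<and> r \<le> card (UNIV :: 'i set) \<and> complete_inf S (maxel T) a r bs}"

definition Dset :: "('i::finite \<Rightarrow> nat) set \<Rightarrow> ('i \<Rightarrow> nat) set \<Rightarrow> ('i \<Rightarrow> nat) set" where
  "Dset S T = maxel T - Cset S T"

fun rest :: "('i::finite \<Rightarrow> nat) set \<Rightarrow> ('i \<Rightarrow> nat) set \<Rightarrow> nat \<Rightarrow> ('i \<Rightarrow> nat) set" where
  "rest S A 0 = A"
| "rest S A (Suc k) = rest S A k - Dset S (rest S A k)"

text \<open>D^(i) for i \<ge> 1.\<close>
definition Dlevel :: "('i::finite \<Rightarrow> nat) set \<Rightarrow> ('i \<Rightarrow> nat) set \<Rightarrow> nat \<Rightarrow> ('i \<Rightarrow> nat) set" where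
  "Dlevel S A i = Dset S (rest S A (i - 1))"

definition Alevel :: "('i::finite \<Rightarrow> nat) set \<Rightarrow> ('i \<Rightarrow> nat) set \<Rightarrow> nat \<Rightarrow> nat \<Rightarrow> ('i \<Rightarrow> nat) set" where
  "Alevel S A N i = Dlevel S A (N + 1 - i)"

definition well_behaved :: "('i \<Rightarrow> nat) set \<Rightarrow> ('i \<Rightarrow> nat) set \<Rightarrow> ('i \<Rightarrow> nat) set \<Rightarrow> bool" where
  "well_behaved S E A \<longleftrightarrow> (\<forall>a r bs. a \<in> S \<and> complete_inf S S a r bs \<and>
      (\<forall>j<r. \<exists>G. bs j \<in> Delta_tilde S G a \<and> Delta_tilde S G a \<subseteq> A) \<longrightarrow> a \<in> E)"

end

theory Submission
  imports Defs
begin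

text \<open>Suppose a \<in> A were a complete infimum of elements of sets Delta_tilde S G a \<subseteq> A.
  By induction on k, no x \<in> D^(k) with a \<le> x is a complete infimum of elements each
  lying in D^(k) or in such a set. They cannot all lie in D^(k), since then x would belong
  to C^(k); so k \<ge> 2, and the hypothesis yields y \<gg> x in D^(k-1). Meeting with y does
  not change supports relative to x. If y \<sqinter> c lies in D^(k) for every element c outside
  D^(k), replacing each such c by y \<sqinter> c makes x a complete infimum inside D^(k), which is
  impossible. Otherwise d = y \<sqinter> c lies in D^(k-1), below y but not \<ll> y, and repeated use
  of (G2) produces elements of Delta_tilde S {l. d l \<noteq> y l} d which together with y have
  d as complete infimum; they still lie in Delta_tilde S G a, contradicting the claim
  for k - 1.\<close>

section \<open>Supports and complete infima\<close>

definition vsupp :: "('i \<Rightarrow> nat) \<Rightarrow> ('i \<Rightarrow> nat) \<Rightarrow> 'i set" where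
  "vsupp x m = {l. m l \<noteq> x l}"

lemma vsupp_empty_iff: "vsupp x m = {} \<longleftrightarrow> m = x"
  unfolding vsupp_def by auto

lemma vsupp_self [simp]: "vsupp x x = {}"
  by (simp add: vsupp_empty_iff)

lemma vsupp_eq_UNIV_iff: "vle x y \<Longrightarrow> vsupp x y = UNIV \<longleftrightarrow> vll x y"
  unfolding vsupp_def vle_def vll_def set_eq_iff by (auto simp: less_le) metis+

lemma vsupp_vmeet: "vle x m \<Longrightarrow> vle x m' \<Longrightarrow> vsupp x (vmeet m m') = vsupp x m \<inter> vsupp x m'"
  unfolding vsupp_def vle_def vmeet_def by (auto simp: min_def dest: le_antisym)

lemma vsupp_mono: "vle x m \<Longrightarrow> vle m m' \<Longrightarrow> vsupp x m \<subseteq> vsupp x m'"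
  unfolding vsupp_def vle_def by clarify (metis le_antisym)

lemma vle_refl [simp]: "vle x x"
  unfolding vle_def by simp

lemma vle_trans: "vle x y \<Longrightarrow> vle y z \<Longrightarrow> vle x z"
  unfolding vle_def using le_trans by blast

lemma vle_vmeet_iff: "vle x (vmeet m m') \<longleftrightarrow> vle x m \<and> vle x m'"
  unfolding vle_def vmeet_def by auto

lemma vmeet_vle: "vle (vmeet m m') m" "vle (vmeet m m') m'"
  unfolding vle_def vmeet_def by auto

lemma vll_imp_vle: "vll x y \<Longrightarrow> vle x y"
  unfolding vll_def vle_def by (simp add: less_imp_le)

lemma vle_vll_trans: "vle x y \<Longrightarrow> vll y z \<Longrightarrow> vll x z"
  unfolding vle_def vll_def using le_less_trans by blast

lemma vll_trans: "vll x y \<Longrightarrow> vll y z \<Longrightarrow> vll x z"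
  unfolding vll_def using less_trans by blast

lemma vsupp_vmeet_vll: "vll x y \<Longrightarrow> vle x m \<Longrightarrow> vsupp x (vmeet y m) = vsupp x m"
  using vll_imp_vle vsupp_eq_UNIV_iff vsupp_vmeet by (metis inf_top_left)

lemma vmeet_eq_iff_disjnt:
  "vle x m \<Longrightarrow> vle x m' \<Longrightarrow> vmeet m m' = x \<longleftrightarrow> disjnt (vsupp x m) (vsupp x m')"
  by (metis vsupp_empty_iff vsupp_vmeet disjnt_def)

lemma mem_Delta_iff: "b \<in> Delta S F a \<longleftrightarrow> b \<in> S \<and> vle a b \<and> vsupp a b = - F"
  unfolding Delta_def vle_def vsupp_def set_eq_iff by (auto simp: less_le) (metis order_refl)

lemma mem_Delta_tilde_iff:
  "b \<in> Delta_tilde S F a \<longleftrightarrow> b \<in> S \<and> vle a b \<and> vsupp a b \<noteq> {} \<and> disjnt F (vsupp a b)"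
proof -
  have "(\<forall>i\<in>F. b i = a i) \<longleftrightarrow> disjnt F (vsupp a b)"
    unfolding vsupp_def disjnt_def by auto
  moreover have "(\<forall>j. j \<notin> F \<longrightarrow> a j \<le> b j) \<longleftrightarrow> vle a b" if "\<forall>i\<in>F. b i = a i"
    using that unfolding vle_def by (metis order_refl)
  ultimately show ?thesis
    unfolding Delta_tilde_def vsupp_empty_iff by blast
qed

text \<open>Set form of a complete infimum: the supports relative to x of the elements of M
  partition the index set into proper nonempty blocks. The sets F_j of the paper are the
  complements of these supports.\<close>

definition complete_inf_of :: "('i \<Rightarrow> nat) set \<Rightarrow> ('i \<Rightarrow> nat) \<Rightarrow> ('i \<Rightarrow> nat) set \<Rightarrow> bool" where
  "complete_inf_of S x M \<longleftrightarrow>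
     (\<forall>m\<in>M. m \<in> S \<and> vle x m \<and> vsupp x m \<noteq> {} \<and> vsupp x m \<noteq> UNIV) \<and>
     pairwise (\<lambda>m m'. disjnt (vsupp x m) (vsupp x m')) M \<and> (\<Union>m\<in>M. vsupp x m) = UNIV"

lemma complete_inf_imp_complete_inf_of:
  assumes "complete_inf S T x r bs"
  shows "complete_inf_of S x (bs ` {..<r})"
proof -
  obtain F where F: "\<And>j. j < r \<Longrightarrow> F j \<noteq> {} \<and> F j \<noteq> UNIV \<and> bs j \<in> Delta S (F j) x"
    and meet: "\<And>j k. j < r \<Longrightarrow> k < r \<Longrightarrow> j \<noteq> k \<Longrightarrow> vmeet (bs j) (bs k) = x"
    and cover: "(\<Inter>j\<in>{..<r}. F j) = {}"
    using assms unfolding complete_inf_def by blast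
  have bs: "bs j \<in> S \<and> vle x (bs j) \<and> vsupp x (bs j) = - F j" if "j < r" for j
    using F[OF that] mem_Delta_iff by blast
  have proper: "vsupp x (bs j) \<noteq> {} \<and> vsupp x (bs j) \<noteq> UNIV" if "j < r" for j
    using F[OF that] bs[OF that] by (metis Compl_empty_eq Compl_UNIV_eq compl_eq_compl_iff)
  have "disjnt (vsupp x (bs j)) (vsupp x (bs k))" if "j < r" "k < r" "bs j \<noteq> bs k" for j k
    using that bs meet vmeet_eq_iff_disjnt by metis
  then have "pairwise (\<lambda>m m'. disjnt (vsupp x m) (vsupp x m')) (bs ` {..<r})"
    unfolding pairwise_image pairwise_def by blast
  moreover have "(\<Union>j\<in>{..<r}. vsupp x (bs j)) = - (\<Inter>j\<in>{..<r}. F j)"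
    using bs by auto
  ultimately show ?thesis
    unfolding complete_inf_of_def using bs proper cover by simp
qed

lemma complete_inf_of_card:
  fixes x :: "'i::finite \<Rightarrow> nat"
  assumes "complete_inf_of S x M"
  shows "finite M \<and> 2 \<le> card M \<and> card M \<le> card (UNIV :: 'i set)"
proof -
  have supp: "\<And>m. m \<in> M \<Longrightarrow> vsupp x m \<noteq> {} \<and> vsupp x m \<noteq> UNIV"
    and disj: "pairwise (\<lambda>m m'. disjnt (vsupp x m) (vsupp x m')) M"
    and cover: "(\<Union>m\<in>M. vsupp x m) = UNIV"
    using assms unfolding complete_inf_of_def by blast+
  define p where "p m = (SOME l. l \<in> vsupp x m)" for m
  have p: "p m \<in> vsupp x m" if "m \<in> M" for m
    unfolding p_def using supp[OF that] by (simp add: some_in_eq)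
  have inj: "inj_on p M"
  proof (rule inj_onI, rule ccontr)
    fix m m' assume m: "m \<in> M" "m' \<in> M" "p m = p m'" "m \<noteq> m'"
    then have "p m \<in> vsupp x m \<inter> vsupp x m'"
      using p[OF m(1)] p[OF m(2)] by simp
    moreover have "disjnt (vsupp x m) (vsupp x m')"
      using pairwiseD[OF disj m(1,2,4)] .
    ultimately show False
      unfolding disjnt_def by blast
  qed
  have fin: "finite M"
    using inj_on_finite[OF inj subset_UNIV finite_UNIV] .
  have le: "card M \<le> card (UNIV :: 'i set)"
    using card_inj_on_le[OF inj subset_UNIV finite_UNIV] .
  obtain m where m: "m \<in> M"
    using cover by fastforce
  then obtain l where l: "l \<notin> vsupp x m"
    using supp by blast
  have "l \<in> (\<Union>m\<in>M. vsupp x m)"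
    using cover by simp
  then obtain m' where "m' \<in> M" "m' \<noteq> m"
    using l by blast
  then have "card {m, m'} \<le> card M"
    using m fin by (intro card_mono) auto
  with \<open>m' \<noteq> m\<close> fin le show ?thesis by simp
qed

lemma complete_inf_of_imp_Cset:
  fixes x :: "'i::finite \<Rightarrow> nat"
  assumes cinf: "complete_inf_of S x M" and x: "x \<in> maxel T" and M: "M \<subseteq> maxel T"
  shows "x \<in> Cset S T"
proof -
  have m: "\<And>m. m \<in> M \<Longrightarrow> m \<in> S \<and> vle x m \<and> vsupp x m \<noteq> {} \<and> vsupp x m \<noteq> UNIV"
    and disj: "pairwise (\<lambda>m m'. disjnt (vsupp x m) (vsupp x m')) M"
    and cover: "(\<Union>m\<in>M. vsupp x m) = UNIV"
    using cinf unfolding complete_inf_of_def by blast+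
  have card: "finite M" "2 \<le> card M" "card M \<le> card (UNIV :: 'i set)"
    using complete_inf_of_card[OF cinf] by auto
  then obtain h where h: "bij_betw h {0..<card M} M"
    using ex_bij_betw_nat_finite by blast
  then have hM: "h j \<in> M" if "j < card M" for j
    using that bij_betwE by fastforce
  define F where "F j = - vsupp x (h j)" for j
  have "complete_inf S (maxel T) x (card M) h"
    unfolding complete_inf_def
  proof (intro conjI allI impI exI[of _ F])
    have "(\<Union>j\<in>{..<card M}. vsupp x (h j)) = UNIV"
      using cover h unfolding bij_betw_def atLeast0LessThan by (metis image_image)
    then show "(\<Inter>j\<in>{..<card M}. F j) = {}"
      unfolding F_def by auto
  next
    fix j assume "j < card M"
    then have hj: "h j \<in> M"
      by (rule hM)
    then show "h j \<in> maxel T"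
      using M by blast
    show "h j \<in> Delta S (F j) x"
      using m[OF hj] unfolding F_def mem_Delta_iff by simp
    show "F j \<noteq> {}"
      using m[OF hj] unfolding F_def by (metis double_compl Compl_empty_eq)
    show "F j \<noteq> UNIV"
      using m[OF hj] unfolding F_def by (metis double_compl Compl_UNIV_eq)
  next
    fix j k assume "j < card M" "k < card M" "j \<noteq> k"
    then have "h j \<noteq> h k"
      using h unfolding bij_betw_def inj_on_def by auto
    moreover have "h j \<in> M" "h k \<in> M"
      using hM \<open>j < card M\<close> \<open>k < card M\<close> by auto
    ultimately show "vmeet (h j) (h k) = x"
      using disj m by (simp add: vmeet_eq_iff_disjnt pairwise_def)
  qed (use x card in \<open>simp_all\<close>)
  moreover have "1 < card M"
    using card by simp
  ultimately show ?thesis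
    unfolding Cset_def using x card by blast
qed

lemma complete_inf_of_image:
  assumes cinf: "complete_inf_of S x M"
    and f: "\<And>m. m \<in> M \<Longrightarrow> f m \<in> S \<and> vle x (f m) \<and> vsupp x (f m) = vsupp x m"
  shows "complete_inf_of S x (f ` M)"
proof -
  have disj: "pairwise (\<lambda>m m'. disjnt (vsupp x m) (vsupp x m')) M"
    using cinf unfolding complete_inf_of_def by blast
  have "disjnt (vsupp x (f m)) (vsupp x (f m'))" if "m \<in> M" "m' \<in> M" "f m \<noteq> f m'" for m m'
    using pairwiseD[OF disj] f that by metis
  then have "pairwise (\<lambda>m m'. disjnt (vsupp x m) (vsupp x m')) (f ` M)"
    unfolding pairwise_image by (simp add: pairwise_def)
  moreover have "(\<Union>m\<in>f ` M. vsupp x m) = UNIV"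
    using cinf f unfolding complete_inf_of_def by (simp add: image_image)
  moreover have "\<forall>m\<in>f ` M. m \<in> S \<and> vle x m \<and> vsupp x m \<noteq> {} \<and> vsupp x m \<noteq> UNIV"
    using cinf f unfolding complete_inf_of_def by auto
  ultimately show ?thesis
    unfolding complete_inf_of_def by blast
qed

lemma complete_inf_of_vmeet_image:
  assumes "G1 S" "y \<in> S" "vll x y" "complete_inf_of S x M"
  shows "complete_inf_of S x ((\<lambda>m. if P m then m else vmeet y m) ` M)"
proof (rule complete_inf_of_image[OF assms(4)], goal_cases)
  case (1 m)
  then have m: "m \<in> S" "vle x m"
    using assms(4) unfolding complete_inf_of_def by blast+
  have "vmeet y m \<in> S"
    using assms(1,2) m(1) unfolding G1_def by blast
  moreover have "vle x (vmeet y m)"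
    using vll_imp_vle[OF assms(3)] m(2) by (simp add: vle_vmeet_iff)
  moreover have "vsupp x (vmeet y m) = vsupp x m"
    using assms(3) m(2) by (rule vsupp_vmeet_vll)
  ultimately show ?case
    using m by simp
qed

lemma vmeet_in_Delta_tilde:
  assumes "G1 S" "c \<in> Delta_tilde S G a" "y \<in> S" "vll a y"
  shows "vmeet y c \<in> Delta_tilde S G a"
proof -
  have c: "c \<in> S" "vle a c" "vsupp a c \<noteq> {}" "disjnt G (vsupp a c)"
    using assms(2) unfolding mem_Delta_tilde_iff by blast+
  have "vle a y"
    using assms(4) by (rule vll_imp_vle)
  have "vsupp a (vmeet y c) = vsupp a c"
    using assms(4) c(2) by (rule vsupp_vmeet_vll)
  moreover have "vmeet y c \<in> S"
    using assms(1,3) c(1) unfolding G1_def by blast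
  ultimately show ?thesis
    using c \<open>vle a y\<close> by (simp add: mem_Delta_tilde_iff vle_vmeet_iff)
qed

lemma Delta_tilde_vsupp_subset:
  assumes d: "d \<in> Delta_tilde S G a" and "vll a y"
  shows "Delta_tilde S (vsupp d y) d \<subseteq> Delta_tilde S G a"
proof
  fix e assume "e \<in> Delta_tilde S (vsupp d y) d"
  then have e: "e \<in> S" "vle d e" "disjnt (vsupp d y) (vsupp d e)"
    by (auto simp: mem_Delta_tilde_iff)
  have ad: "vle a d"
    using d by (simp add: mem_Delta_tilde_iff)
  have "e l = a l" if "l \<notin> vsupp a d" for l
  proof -
    have "d l = a l"
      using that unfolding vsupp_def by simp
    moreover have "a l < y l"
      using \<open>vll a y\<close> unfolding vll_def by blast
    ultimately have "l \<in> vsupp d y"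
      unfolding vsupp_def by simp
    then have "l \<notin> vsupp d e"
      using e(3) unfolding disjnt_def by blast
    with \<open>d l = a l\<close> show ?thesis
      unfolding vsupp_def by simp
  qed
  then have "vsupp a e \<subseteq> vsupp a d"
    unfolding vsupp_def by blast
  then have "vsupp a e = vsupp a d"
    using ad e(2) vsupp_mono by blast
  then show "e \<in> Delta_tilde S G a"
    using d e(1,2) ad vle_trans by (auto simp: mem_Delta_tilde_iff)
qed

section \<open>Complete infima produced by axiom (G2)\<close>

lemma G2_Delta_tilde_avoiding:
  assumes "G2 S" "y \<in> S" "e \<in> S" "vle w y" "vle w e" "vsupp w y \<noteq> {}"
    and "disjnt (vsupp w y) (vsupp w e)" "i \<notin> vsupp w y" "i \<notin> vsupp w e"
  shows "\<exists>\<epsilon>\<in>Delta_tilde S (vsupp w y) w. i \<in> vsupp w \<epsilon> \<and> disjnt (vsupp w e) (vsupp w \<epsilon>)"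
proof -
  have "e \<noteq> y"
    using assms(6,7) by (auto simp: disjnt_def)
  moreover have "e i = y i"
    using assms(8,9) unfolding vsupp_def by simp
  ultimately obtain \<epsilon> where \<epsilon>: "\<epsilon> \<in> S" "\<epsilon> i > e i"
    and off_i: "\<And>j. j \<noteq> i \<Longrightarrow> \<epsilon> j \<ge> min (e j) (y j) \<and> (e j \<noteq> y j \<longrightarrow> \<epsilon> j = min (e j) (y j))"
    using assms(1-3) unfolding G2_def by blast
  have w: "w j \<le> e j" "w j \<le> y j" for j
    using assms(4,5) unfolding vle_def by auto
  have "vle w \<epsilon>"
    unfolding vle_def using \<epsilon>(2) off_i w by (metis le_trans less_imp_le min.bounded_iff)
  moreover have "\<epsilon> l = w l" if "l \<in> vsupp w y \<union> vsupp w e" for l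
  proof -
    have "l \<noteq> i" "e l \<noteq> y l" "e l = w l \<or> y l = w l"
      using that assms(7-9) unfolding vsupp_def disjnt_def by auto
    moreover have "min (e l) (y l) = w l"
      using calculation(3) w[of l] by linarith
    ultimately show ?thesis
      using off_i by simp
  qed
  moreover have "i \<in> vsupp w \<epsilon>"
    using \<epsilon>(2) assms(9) unfolding vsupp_def by simp
  ultimately show ?thesis
    using \<epsilon>(1) by (intro bexI[of _ \<epsilon>]) (auto simp: mem_Delta_tilde_iff disjnt_def vsupp_def)
qed

lemma G2_Delta_tilde_avoiding_finite:
  assumes "G1 S" "G2 S" "w \<in> S" "y \<in> S" "vle w y" "vsupp w y \<noteq> {}" "i \<notin> vsupp w y"
    and "finite Es" "Es \<subseteq> Delta_tilde S (vsupp w y) w" "i \<notin> (\<Union>e\<in>Es. vsupp w e)"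
  shows "\<exists>\<epsilon>\<in>Delta_tilde S (vsupp w y) w. i \<in> vsupp w \<epsilon> \<and> (\<forall>e\<in>Es. disjnt (vsupp w e) (vsupp w \<epsilon>))"
  using assms(8-10)
proof (induction Es rule: finite_induct)
  case empty
  show ?case
    using G2_Delta_tilde_avoiding[OF assms(2,4,3,5) vle_refl assms(6) _ assms(7)] by simp
next
  case (insert e Es)
  obtain \<epsilon>1 where \<epsilon>1: "\<epsilon>1 \<in> Delta_tilde S (vsupp w y) w" "i \<in> vsupp w \<epsilon>1"
    "\<forall>e\<in>Es. disjnt (vsupp w e) (vsupp w \<epsilon>1)"
    using insert by auto
  have e: "e \<in> S" "vle w e" "disjnt (vsupp w y) (vsupp w e)" "i \<notin> vsupp w e"
    using insert.prems by (auto simp: mem_Delta_tilde_iff)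
  obtain \<epsilon>2 where \<epsilon>2: "\<epsilon>2 \<in> Delta_tilde S (vsupp w y) w" "i \<in> vsupp w \<epsilon>2"
    "disjnt (vsupp w e) (vsupp w \<epsilon>2)"
    using G2_Delta_tilde_avoiding[OF assms(2,4) e(1) assms(5) e(2) assms(6) e(3) assms(7) e(4)] by blast
  have \<epsilon>12: "\<epsilon>1 \<in> S" "\<epsilon>2 \<in> S" "vle w \<epsilon>1" "vle w \<epsilon>2"
    "disjnt (vsupp w y) (vsupp w \<epsilon>1)" "disjnt (vsupp w y) (vsupp w \<epsilon>2)"
    using \<epsilon>1(1) \<epsilon>2(1) by (auto simp: mem_Delta_tilde_iff)
  define \<epsilon> where "\<epsilon> = vmeet \<epsilon>1 \<epsilon>2"
  have supp: "vsupp w \<epsilon> = vsupp w \<epsilon>1 \<inter> vsupp w \<epsilon>2"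
    unfolding \<epsilon>_def using \<epsilon>12 by (simp add: vsupp_vmeet)
  have "\<epsilon> \<in> Delta_tilde S (vsupp w y) w"
    using assms(1) \<epsilon>12 \<epsilon>1(2) \<epsilon>2(2) supp
    unfolding mem_Delta_tilde_iff G1_def \<epsilon>_def by (auto simp: vle_vmeet_iff disjnt_def)
  moreover have "\<forall>e'\<in>insert e Es. disjnt (vsupp w e') (vsupp w \<epsilon>)"
    using \<epsilon>1(3) \<epsilon>2(3) supp by (auto simp: disjnt_def)
  moreover have "i \<in> vsupp w \<epsilon>"
    using \<epsilon>1(2) \<epsilon>2(2) supp by blast
  ultimately show ?case
    by blast
qed

lemma ex_Delta_tilde_partition:
  fixes w y :: "'i::finite \<Rightarrow> nat"
  assumes "G1 S" "G2 S" "w \<in> S" "y \<in> S" "vle w y" "vsupp w y \<noteq> {}"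
  shows "\<exists>Es\<subseteq>Delta_tilde S (vsupp w y) w.
    pairwise (\<lambda>e e'. disjnt (vsupp w e) (vsupp w e')) Es \<and> - vsupp w y \<subseteq> (\<Union>e\<in>Es. vsupp w e)"
proof -
  have "\<exists>Es\<subseteq>Delta_tilde S (vsupp w y) w. finite Es \<and>
    pairwise (\<lambda>e e'. disjnt (vsupp w e) (vsupp w e')) Es \<and> K - vsupp w y \<subseteq> (\<Union>e\<in>Es. vsupp w e)"
    if "finite K" for K
    using that
  proof (induction K rule: finite_induct)
    case empty
    show ?case
      by (intro exI[of _ "{}"]) simp
  next
    case (insert i K)
    obtain Es where Es: "Es \<subseteq> Delta_tilde S (vsupp w y) w" "finite Es"
      "pairwise (\<lambda>e e'. disjnt (vsupp w e) (vsupp w e')) Es" "K - vsupp w y \<subseteq> (\<Union>e\<in>Es. vsupp w e)"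
      using insert.IH by blast
    show ?case
    proof (cases "i \<in> vsupp w y \<union> (\<Union>e\<in>Es. vsupp w e)")
      case True
      then show ?thesis
        using Es by (intro exI[of _ Es]) auto
    next
      case False
      obtain \<epsilon> where \<epsilon>: "\<epsilon> \<in> Delta_tilde S (vsupp w y) w" "i \<in> vsupp w \<epsilon>"
        "\<forall>e\<in>Es. disjnt (vsupp w e) (vsupp w \<epsilon>)"
        using G2_Delta_tilde_avoiding_finite[OF assms _ Es(2,1)] False by blast
      have "pairwise (\<lambda>e e'. disjnt (vsupp w e) (vsupp w e')) (insert \<epsilon> Es)"
        using Es(3) \<epsilon>(3) by (auto simp: pairwise_insert disjnt_sym)
      then show ?thesis
        using Es \<epsilon> by (intro exI[of _ "insert \<epsilon> Es"]) auto
    qed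
  qed
  from this[OF finite_UNIV] show ?thesis
    unfolding Compl_eq_Diff_UNIV by blast
qed

lemma ex_complete_inf_of_insert:
  fixes w y :: "'i::finite \<Rightarrow> nat"
  assumes "G1 S" "G2 S" "w \<in> S" "y \<in> S" "vle w y" "vsupp w y \<noteq> {}" "vsupp w y \<noteq> UNIV"
  shows "\<exists>Es\<subseteq>Delta_tilde S (vsupp w y) w. complete_inf_of S w (insert y Es)"
proof -
  obtain Es where Es: "Es \<subseteq> Delta_tilde S (vsupp w y) w"
    "pairwise (\<lambda>e e'. disjnt (vsupp w e) (vsupp w e')) Es" "- vsupp w y \<subseteq> (\<Union>e\<in>Es. vsupp w e)"
    using ex_Delta_tilde_partition[OF assms(1-6)] by blast
  have e: "e \<in> S \<and> vle w e \<and> vsupp w e \<noteq> {} \<and> disjnt (vsupp w y) (vsupp w e)" if "e \<in> Es" for e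
    using that Es(1) by (auto simp: mem_Delta_tilde_iff)
  moreover have "vsupp w e \<noteq> UNIV" if "e \<in> Es" for e
    using e[OF that] assms(6) by (auto simp: disjnt_def)
  ultimately have "\<forall>m\<in>insert y Es. m \<in> S \<and> vle w m \<and> vsupp w m \<noteq> {} \<and> vsupp w m \<noteq> UNIV"
    using assms(4-7) by blast
  moreover have "pairwise (\<lambda>e e'. disjnt (vsupp w e) (vsupp w e')) (insert y Es)"
    using Es(2) e by (auto simp: pairwise_insert disjnt_sym)
  moreover have "(\<Union>e\<in>insert y Es. vsupp w e) = UNIV"
    using Es(3) by auto
  ultimately have "complete_inf_of S w (insert y Es)"
    unfolding complete_inf_of_def by blast
  then show ?thesis
    using Es(1) by blast
qed

section \<open>Levels\<close>

lemma Dlevel_subset_maxel: "Dlevel S A k \<subseteq> maxel (rest S A (k - 1))"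
  unfolding Dlevel_def Dset_def by blast

lemma rest_subset: "rest S A k \<subseteq> A"
  by (induction k) auto

lemma Dlevel_subset: "Dlevel S A k \<subseteq> A"
  using Dlevel_subset_maxel rest_subset unfolding maxel_def by blast

lemma Dlevel_not_vll:
  assumes "x \<in> Dlevel S A k" "z \<in> Dlevel S A k"
  shows "\<not> vll x z"
proof
  assume "vll x z"
  moreover have "x \<in> maxel (rest S A (k - 1))" "z \<in> rest S A (k - 1)"
    using assms Dlevel_subset_maxel unfolding maxel_def by blast+
  ultimately have "z = x"
    unfolding maxel_def vlele_def by blast
  with \<open>vll x z\<close> show False
    unfolding vll_def by simp
qed

lemma Dlevel_not_complete_inf_of:
  "x \<in> Dlevel S A k \<Longrightarrow> M \<subseteq> Dlevel S A k \<Longrightarrow> \<not> complete_inf_of S x M"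
  using complete_inf_of_imp_Cset Dlevel_subset_maxel unfolding Dlevel_def Dset_def by blast

locale dominated_levels =
  fixes S :: "('i::finite \<Rightarrow> nat) set" and A :: "('i \<Rightarrow> nat) set" and N :: nat
  assumes subset: "A \<subseteq> S"
    and covered: "z \<in> A \<Longrightarrow> \<exists>k\<in>{1..N}. z \<in> Dlevel S A k"
    and dominated: "k \<in> {2..N} \<Longrightarrow> x \<in> Dlevel S A k \<Longrightarrow> \<exists>y\<in>Dlevel S A (k - 1). vll x y"
begin

abbreviation D :: "nat \<Rightarrow> ('i \<Rightarrow> nat) set" where
  "D \<equiv> Dlevel S A"

lemma dominated_chain: "1 \<le> k \<Longrightarrow> k < m \<Longrightarrow> m \<le> N \<Longrightarrow> x \<in> D m \<Longrightarrow> \<exists>y\<in>D k. vll x y"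
proof (induction m arbitrary: x)
  case 0
  then show ?case by simp
next
  case (Suc m)
  then obtain y where y: "y \<in> D m" "vll x y"
    using dominated[of "Suc m" x] by auto
  show ?case
  proof (cases "k = m")
    case True
    then show ?thesis
      using y by blast
  next
    case False
    then obtain z where "z \<in> D k" "vll y z"
      using Suc y(1) by auto
    then show ?thesis
      using y(2) vll_trans by blast
  qed
qed

lemma level_le_if_vle:
  assumes "k \<in> {1..N}" "m \<in> {1..N}" "x \<in> D k" "z \<in> D m" "vle x z"
  shows "m \<le> k"
proof (rule ccontr)
  assume "\<not> m \<le> k"
  then obtain y where "y \<in> D k" "vll z y"
    using dominated_chain[of k m z] assms by auto
  then show False
    using assms(3,5) vle_vll_trans Dlevel_not_vll by blast
qed

lemma level_between:
  assumes "k \<in> {2..N}" "x \<in> D k" "y \<in> D (k - 1)" "d \<in> A" "d \<notin> D k" "vle x d" "vle d y"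
  shows "d \<in> D (k - 1)"
proof -
  obtain p where p: "p \<in> {1..N}" "d \<in> D p"
    using assms(4) covered by blast
  have levels: "k \<in> {1..N}" "k - 1 \<in> {1..N}"
    using assms(1) by auto
  have "p \<le> k"
    using level_le_if_vle[OF levels(1) p(1) assms(2) p(2) assms(6)] .
  moreover have "k - 1 \<le> p"
    using level_le_if_vle[OF p(1) levels(2) p(2) assms(3,7)] .
  moreover have "p \<noteq> k"
    using p(2) assms(5) by blast
  ultimately have "p = k - 1"
    by linarith
  with p(2) show ?thesis
    by simp
qed

lemma descend_level:
  assumes "G1 S" "G2 S" and \<G>: "\<forall>G\<in>\<G>. Delta_tilde S G a \<subseteq> A"
    and k: "k \<in> {2..N}" and x: "x \<in> D k" "vle a x" and y: "y \<in> D (k - 1)" "vll x y"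
    and c: "c \<in> Delta_tilde S G a" "G \<in> \<G>" "vle x c" "vsupp x c \<noteq> UNIV" "vmeet y c \<notin> D k"
  shows "\<exists>d M'. d \<in> D (k - 1) \<and> vle a d \<and> complete_inf_of S d M' \<and>
    M' \<subseteq> D (k - 1) \<union> (\<Union>G\<in>\<G>. Delta_tilde S G a)"
proof -
  define d where "d = vmeet y c"
  have yS: "y \<in> S"
    using y(1) Dlevel_subset subset by blast
  have ay: "vll a y"
    using x(2) y(2) by (rule vle_vll_trans)
  then have dG: "d \<in> Delta_tilde S G a"
    unfolding d_def using vmeet_in_Delta_tilde[OF assms(1) c(1) yS] by blast
  have xd: "vle x d" and dy: "vle d y"
    unfolding d_def using y(2) c(3) vmeet_vle vll_imp_vle by (auto simp: vle_vmeet_iff)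
  have dD: "d \<in> D (k - 1)"
    using level_between[OF k x(1) y(1) _ _ xd dy] dG \<G> c(2,5) unfolding d_def by blast
  have "vsupp x d = vsupp x c"
    unfolding d_def using y(2) c(3) by (rule vsupp_vmeet_vll)
  then have "vsupp d y \<noteq> {}"
    using c(4) y(2) vll_imp_vle vsupp_eq_UNIV_iff vsupp_empty_iff by metis
  moreover have "vsupp d y \<noteq> UNIV"
    using Dlevel_not_vll[OF dD y(1)] vsupp_eq_UNIV_iff[OF dy] by blast
  moreover have "d \<in> S"
    using dG by (simp add: mem_Delta_tilde_iff)
  ultimately obtain Es where Es: "Es \<subseteq> Delta_tilde S (vsupp d y) d" "complete_inf_of S d (insert y Es)"
    using ex_complete_inf_of_insert[OF assms(1,2) _ yS dy] by blast
  moreover have "Es \<subseteq> Delta_tilde S G a"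
    using Es(1) Delta_tilde_vsupp_subset[OF dG ay] by blast
  ultimately show ?thesis
    using dD dG y(1) c(2) by (intro exI[of _ d] exI[of _ "insert y Es"]) (auto simp: mem_Delta_tilde_iff)
qed

lemma no_complete_inf_of_above:
  assumes "G1 S" "G2 S" and \<G>: "\<forall>G\<in>\<G>. Delta_tilde S G a \<subseteq> A"
  shows "k \<in> {1..N} \<Longrightarrow> x \<in> D k \<Longrightarrow> vle a x \<Longrightarrow> M \<subseteq> D k \<union> (\<Union>G\<in>\<G>. Delta_tilde S G a) \<Longrightarrow>
    \<not> complete_inf_of S x M"
proof (induction k arbitrary: x M rule: less_induct)
  case (less k)
  show ?case
  proof
    assume cinf: "complete_inf_of S x M"
    then have M: "vle x m \<and> vsupp x m \<noteq> UNIV" if "m \<in> M" for m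
      using that unfolding complete_inf_of_def by blast
    obtain c where c: "c \<in> M" "c \<notin> D k"
      using Dlevel_not_complete_inf_of[OF less.prems(2)] cinf by blast
    then have "c \<in> A"
      using less.prems(4) \<G> by blast
    then obtain m where m: "m \<in> {1..N}" "c \<in> D m"
      using covered by blast
    then have "m \<le> k"
      using level_le_if_vle[OF less.prems(1) m(1) less.prems(2) m(2)] M c(1) by blast
    with m c have k: "k \<in> {2..N}"
      using less.prems(1) by (cases "m = k") auto
    then obtain y where y: "y \<in> D (k - 1)" "vll x y"
      using dominated less.prems(2) by blast
    have yS: "y \<in> S"
      using y(1) Dlevel_subset subset by blast
    show False
    proof (cases "\<exists>c\<in>M. c \<notin> D k \<and> vmeet y c \<notin> D k")
      case True
      then obtain c G where "c \<in> M" "c \<notin> D k" "vmeet y c \<notin> D k" "G \<in> \<G>" "c \<in> Delta_tilde S G a"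
        using less.prems(4) by blast
      then obtain d M' where "d \<in> D (k - 1)" "vle a d"
        "M' \<subseteq> D (k - 1) \<union> (\<Union>G\<in>\<G>. Delta_tilde S G a)" "complete_inf_of S d M'"
        using descend_level[OF assms k less.prems(2,3) y] M by blast
      moreover have "k - 1 < k" "k - 1 \<in> {1..N}"
        using k by auto
      ultimately show False
        using less.IH by blast
    next
      case False
      let ?M' = "(\<lambda>m. if m \<in> D k then m else vmeet y m) ` M"
      have "complete_inf_of S x ?M'"
        using complete_inf_of_vmeet_image[OF assms(1) yS y(2) cinf] .
      moreover have "?M' \<subseteq> D k"
        using False by auto
      ultimately show False
        using Dlevel_not_complete_inf_of less.prems(2) by blast
    qed
  qed
qed

end

lemma dominated_levels_if_Alevel:
  fixes S A :: "('i::finite \<Rightarrow> nat) set"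
  assumes "A \<subseteq> S"
    and cover: "A = (\<Union>i\<in>{1..N}. Alevel S A N i)"
    and dominated: "\<forall>i\<in>{1..N-1}. \<forall>a\<in>Alevel S A N i. \<exists>b\<in>Alevel S A N (i+1). vll a b"
  shows "dominated_levels S A N"
proof
  show "A \<subseteq> S"
    by fact
next
  fix z assume "z \<in> A"
  then obtain i where "i \<in> {1..N}" "z \<in> Dlevel S A (N + 1 - i)"
    using cover unfolding Alevel_def by blast
  then show "\<exists>k\<in>{1..N}. z \<in> Dlevel S A k"
    by (intro bexI[of _ "N + 1 - i"]) auto
next
  fix k x assume k: "k \<in> {2..N}" and x: "x \<in> Dlevel S A k"
  define i where "i = N + 1 - k"
  have i: "i \<in> {1..N-1}" "N + 1 - i = k" "N + 1 - (i + 1) = k - 1"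
    using k unfolding i_def by auto
  have "x \<in> Alevel S A N i"
    unfolding Alevel_def i(2) by (rule x)
  then obtain y where "y \<in> Alevel S A N (i + 1)" "vll x y"
    using dominated i(1) by blast
  then show "\<exists>y\<in>Dlevel S A (k - 1). vll x y"
    unfolding Alevel_def i(3) by blast
qed

lemma (in dominated_levels) complete_inf_notin:
  assumes "G1 S" "G2 S" "complete_inf S S a r bs"
    and "\<forall>j<r. \<exists>G. bs j \<in> Delta_tilde S G a \<and> Delta_tilde S G a \<subseteq> A"
  shows "a \<notin> A"
proof
  assume "a \<in> A"
  then obtain k where "k \<in> {1..N}" "a \<in> D k"
    using covered by blast
  moreover have "vle a a"
    by simp
  moreover have "bs ` {..<r} \<subseteq> D k \<union> (\<Union>G\<in>{G. Delta_tilde S G a \<subseteq> A}. Delta_tilde S G a)"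
    using assms(4) by blast
  ultimately show False
    using no_complete_inf_of_above[OF assms(1,2), of "{G. Delta_tilde S G a \<subseteq> A}"]
      complete_inf_imp_complete_inf_of[OF assms(3)] by blast
qed

theorem proposition5p3:
  fixes S E :: "('i::finite \<Rightarrow> nat) set" and N :: nat
  assumes "good_semigroup S"
    and "good_ideal S E"
    and "E \<noteq> S"
    and "S - E = (\<Union>i\<in>{1..N}. Alevel S (S - E) N i)"
    and "\<forall>i\<in>{1..N-1}. \<forall>a\<in>Alevel S (S - E) N i. \<exists>b\<in>Alevel S (S - E) N (i+1). vll a b"
  shows "well_behaved S E (S - E)"
proof -
  \<comment> \<open>Only (G1) and (G2) for S are used.\<close>
  interpret dominated_levels S "S - E" N
    using assms(4,5) by (intro dominated_levels_if_Alevel) auto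
  have "G1 S" "G2 S"
    using assms(1) unfolding good_semigroup_def by auto
  then show ?thesis
    unfolding well_behaved_def using complete_inf_notin by blast
qed

end
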